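(* Let $w=w_1w_2w_3\cdots$ be a Sturmian word over the alphabet $\{a,b\}$, and let $\beta_w=\lim_{n\to\infty}\frac{|\{1\le j\le n: w_j=b\}|}{n}$ (this limit exists for every Sturmian word). Then for every $\delta>0$, \[ M_w(x)=\frac{\beta_w\log 2}{2}\,x+O_\delta\!\left(x^{1/3+\delta}\right)\qquad (x\ge 1), \] where the implied constant depends only on $\delta$ (and $w$).
   Context: A Sturmian word is an infinite word $w=w_1w_2\cdots$ with letters $w_j\in\{a,b\}$ whose complexity function $p_w(n)$, the number of distinct subwords (factors) of length $n$ of $w$, satisfies $p_w(n)=n+1$ for all $n\ge1$. For $n\ge1$ define $o_w(n)=|\{j\in\mathbb{N}: j\mid n,\ w_j=b,\ n/j \text{ odd}\}|$ and $e_w(n)=|\{j\in\mathbb{N}: j\mid n,\ w_j=b,\ n/j\text{ even}\}|$, and $D_w(n)=o_w(n)-e_w(n)$. The mollified average is $M_w(x)=\sum_{n\le x}\left(1-\frac{n}{x}\right)D_w(n)$ (the paper prints the weight as $1-x/n$, but its Perron-formula representation $M_w(x)=\frac{1}{2\pi i}\int_{c-i\infty}^{c+i\infty}\frac{(1-2^{1-s})\zeta(s)F(s)x^s}{s(s+1)}ds$, $c>1$, with $F(s)=\sum_{n\ge1}\mathbf{1}[w_n=b]\,n^{-s}$, corresponds to the weight $1-n/x$). *)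

theory Defs
  imports "HOL-Analysis.Analysis"
begin

text \<open>An infinite word over {a,b} is a function w :: nat => bool on positions 1,2,3,...
  (w j = True means the letter b, w j = False means a; the value at 0 is irrelevant).\<close>

definition factors :: "(nat \<Rightarrow> bool) \<Rightarrow> nat \<Rightarrow> bool list set" where
  "factors w n = {map w [i..<i+n] | i. i \<ge> 1}"

definition complexity :: "(nat \<Rightarrow> bool) \<Rightarrow> nat \<Rightarrow> nat" where
  "complexity w n = card (factors w n)"

definition sturmian :: "(nat \<Rightarrow> bool) \<Rightarrow> bool" where
  "sturmian w \<longleftrightarrow> (\<forall>n\<ge>1. complexity w n = n + 1)"

definition o_w :: "(nat \<Rightarrow> bool) \<Rightarrow> nat \<Rightarrow> nat" where
  "o_w w n = card {j. j dvd n \<and> w j \<and> odd (n div j)}"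

definition e_w :: "(nat \<Rightarrow> bool) \<Rightarrow> nat \<Rightarrow> nat" where
  "e_w w n = card {j. j dvd n \<and> w j \<and> even (n div j)}"

definition D_w :: "(nat \<Rightarrow> bool) \<Rightarrow> nat \<Rightarrow> int" where
  "D_w w n = int (o_w w n) - int (e_w w n)"

definition M_w :: "(nat \<Rightarrow> bool) \<Rightarrow> real \<Rightarrow> real" where
  "M_w w x = (\<Sum>n\<in>{1..nat \<lfloor>x\<rfloor>}. (1 - real n / x) * real_of_int (D_w w n))"

definition b_freq :: "(nat \<Rightarrow> bool) \<Rightarrow> nat \<Rightarrow> real" where
  "b_freq w n = real (card {j. 1 \<le> j \<and> j \<le> n \<and> w j}) / real n"

definition beta_w :: "(nat \<Rightarrow> bool) \<Rightarrow> real" where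
  "beta_w w = lim (b_freq w)"

end

theory Submission
  imports Defs
begin

text \<open>A Sturmian word is balanced: two factors of equal length contain numbers of letters
  \<open>b\<close> differing by at most one. Otherwise a shortest unbalanced pair of factors has the form
  \<open>b u b\<close>, \<open>a u a\<close> with \<open>u\<close> a palindrome. Then \<open>u\<close> is the only right special factor of
  its length and \<open>a u b\<close>, \<open>b u a\<close> do not both occur, so the letter preceding one
  occurrence of \<open>u\<close> is passed on to all later occurrences; this contradicts the recurrence
  of the occurrence preceded by the other letter.

  Balance yields a frequency \<open>\<beta>\<close> of \<open>b\<close> with error at most \<open>1\<close> on every prefix.
  Interchanging the divisor sum gives \<open>M_w(x) = \<Sum> \<chi>(m) F(x/m) / (x/m)\<close> over \<open>m \<le> x\<close>, with
  \<open>\<chi>(m) = (-1)^(m+1)\<close> and \<open>F(Y) = \<Sum> (Y - j)\<close> over the positions \<open>j \<le> Y\<close> of \<open>b\<close>. Now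
  \<open>F(Y) = \<beta> Y\<^sup>2 / 2 + E(Y)\<close> with \<open>E\<close> 2-Lipschitz and \<open>E(0) = 0\<close>. The terms \<open>\<chi>(m) \<beta> x / (2 m)\<close>
  sum to \<open>\<beta> x log 2 / 2 + O(1)\<close>, and pairing consecutive terms \<open>\<chi>(m) E(x/m) / (x/m)\<close>
  bounds the rest by \<open>O(log x)\<close>, stronger than the claimed \<open>O(x^(1/3 + \<delta>))\<close>.\<close>

section \<open>Factor complexity\<close>

lemma finite_factors: "finite (factors w n)"
proof (rule finite_subset)
  show "factors w n \<subseteq> {xs. set xs \<subseteq> UNIV \<and> length xs = n}"
    by (auto simp: factors_def)
qed (rule finite_lists_length_eq, simp)

lemma factors_0: "factors w 0 = {[]}"
  by (auto simp: factors_def)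

lemma card_factors_sturmian: "sturmian w \<Longrightarrow> card (factors w n) = n + 1"
  by (cases "n = 0") (auto simp: sturmian_def complexity_def factors_0)

lemma map_upt_eq_iff: "map x [s..<s+k] = map x [t..<t+k] \<longleftrightarrow> (\<forall>r<k. x (s+r) = x (t+r))"
  by (auto simp: list_eq_iff_nth_eq)

lemma map_upt_in_factors: "1 \<le> i \<Longrightarrow> map w [i..<i+n] \<in> factors w n"
  by (auto simp: factors_def)

lemma factors_take: "take k ` factors w (Suc k) = factors w k"
proof
  show "take k ` factors w (Suc k) \<subseteq> factors w k"
    by (auto simp: factors_def take_map)
  show "factors w k \<subseteq> take k ` factors w (Suc k)"
  proof
    fix v assume "v \<in> factors w k"
    then obtain i where i: "1 \<le> i" "v = map w [i..<i+k]" by (auto simp: factors_def)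
    then have "v = take k (map w [i..<i+Suc k])" by (simp add: take_map)
    with map_upt_in_factors[OF i(1)] show "v \<in> take k ` factors w (Suc k)" by blast
  qed
qed

lemma card_factors_mono: "card (factors w k) \<le> card (factors w (Suc k))"
  by (metis card_image_le factors_take finite_factors)

text \<open>A right special factor is one that extends to the right by both letters. Deleting
  the last letter maps the factors of length \<open>k+1\<close> onto those of length \<open>k\<close>, and two
  right special factors account for two collisions.\<close>

lemma two_right_special_card_factors:
  assumes "U \<noteq> W" "U@[True] \<in> factors w (Suc k)" "U@[False] \<in> factors w (Suc k)"
    "W@[True] \<in> factors w (Suc k)" "W@[False] \<in> factors w (Suc k)"
  shows "card (factors w k) + 2 \<le> card (factors w (Suc k))"
proof -
  let ?A = "factors w (Suc k) - {U@[False], W@[False]}"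
  have "factors w k \<subseteq> take k ` ?A"
  proof
    fix v assume "v \<in> factors w k"
    then obtain u where u: "u \<in> factors w (Suc k)" "v = take k u"
      using factors_take by blast
    have "length U = k" "length W = k" using assms(2,4) by (auto simp: factors_def)
    then have "take k (U@[True]) = U" "take k (W@[True]) = W" by auto
    moreover have "v \<in> {U, W}" if "u \<in> {U@[False], W@[False]}"
      using that u(2) \<open>length U = k\<close> \<open>length W = k\<close> by auto
    moreover have "U \<in> take k ` ?A" "W \<in> take k ` ?A"
      using assms(2,4) \<open>take k (U@[True]) = U\<close> \<open>take k (W@[True]) = W\<close>
      by (metis Diff_iff append1_eq_conv empty_iff image_eqI insert_iff)+
    ultimately show "v \<in> take k ` ?A"
      using u by (cases "u \<in> {U@[False], W@[False]}") auto
  qed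
  then have "card (factors w k) \<le> card (take k ` ?A)"
    by (intro card_mono) (simp_all add: finite_factors)
  also have "\<dots> \<le> card ?A" by (rule card_image_le) (simp add: finite_factors)
  also have "\<dots> = card (factors w (Suc k)) - 2"
    using assms by (simp add: card_Diff_subset finite_factors)
  finally show ?thesis
    using assms card_mono[OF finite_factors, of "{U@[False], W@[False]}" w "Suc k"] by auto
qed

lemma sturmian_right_special_unique:
  assumes "sturmian w" "U@[True] \<in> factors w (Suc k)" "U@[False] \<in> factors w (Suc k)"
    "W@[True] \<in> factors w (Suc k)" "W@[False] \<in> factors w (Suc k)"
  shows "U = W"
proof (rule ccontr)
  assume "U \<noteq> W"
  from two_right_special_card_factors[OF this assms(2-5)] show False
    using card_factors_sturmian[OF assms(1)] by simp
qed

lemma factors_extend_uniquely: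
  assumes "card (factors y (Suc k)) \<le> card (factors y k)"
    and "1 \<le> s" "1 \<le> t" "\<forall>r<k. y (s+r) = y (t+r)"
  shows "y (s+k) = y (t+k)"
proof -
  have "inj_on (take k) (factors y (Suc k))"
    using assms(1) card_factors_mono[of y k]
    by (intro eq_card_imp_inj_on finite_factors) (simp add: factors_take)
  moreover have "take k (map y [s..<s+Suc k]) = take k (map y [t..<t+Suc k])"
    using assms(4) by (simp add: take_map map_upt_eq_iff)
  ultimately have "map y [s..<s+Suc k] = map y [t..<t+Suc k]"
    using map_upt_in_factors[OF assms(2)] map_upt_in_factors[OF assms(3)] by (rule inj_onD)
  then show ?thesis by (simp add: map_upt_eq_iff)
qed

lemma repeated_factor:
  assumes "1 \<le> a" "card (factors y k) \<le> n"
  obtains s t where "a \<le> s" "s < t" "t \<le> a + n" "map y [s..<s+k] = map y [t..<t+k]"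
proof -
  define W where "W t = map y [t..<t+k]" for t
  have "W ` {a..a+n} \<subseteq> factors y k" using assms(1) by (auto simp: W_def intro!: map_upt_in_factors)
  from card_mono[OF finite_factors this] have "card (W ` {a..a+n}) \<le> n" using assms(2) by simp
  then have "\<not> inj_on W {a..a+n}" using card_image[of W "{a..a+n}"] by auto
  then obtain s t where st: "s \<in> {a..a+n}" "t \<in> {a..a+n}" "s \<noteq> t" "W s = W t"
    unfolding inj_on_def by blast
  show ?thesis
  proof (cases "s < t")
    case True
    with st show ?thesis using that[of s t] by (auto simp: W_def)
  next
    case False
    with st show ?thesis using that[of t s] by (auto simp: W_def)
  qed
qed

text \<open>One direction of the Morse--Hedlund theorem: if the complexity fails to grow at
  length \<open>k\<close>, every factor of length \<open>k\<close> determines its successor letter, so a repeated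
  factor of length \<open>k\<close> makes the word periodic from there on.\<close>

lemma periodic_after_repeated_factor:
  assumes "card (factors y (Suc k)) \<le> card (factors y k)" "1 \<le> s" "s < t"
    and "map y [s..<s+k] = map y [t..<t+k]" "s \<le> i"
  shows "y (i + (t-s)) = y i"
  using assms(5)
proof (induction i rule: less_induct)
  case (less i)
  show ?case
  proof (cases "i < s + k")
    case True
    then have "i - s < k" using less.prems by simp
    with assms(4) have "y (s + (i-s)) = y (t + (i-s))" by (simp add: map_upt_eq_iff)
    moreover have "s + (i-s) = i" "t + (i-s) = i + (t-s)" using less.prems assms(3) by auto
    ultimately show ?thesis by simp
  next
    case False
    have "\<forall>r<k. y ((i-k)+r) = y ((i-k) + (t-s) + r)"
    proof (intro allI impI)
      fix r assume "r < k"
      with False have "i - k + r < i" "s \<le> i - k + r" by linarith+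
      from less.IH[OF this] show "y ((i-k)+r) = y ((i-k) + (t-s) + r)"
        by (simp add: ac_simps)
    qed
    moreover have "1 \<le> i - k" "1 \<le> i - k + (t-s)" using False assms(2) by linarith+
    ultimately have "y (i-k+k) = y (i-k + (t-s) + k)"
      by (rule factors_extend_uniquely[OF assms(1), rotated 2])
    moreover have "i-k+k = i" "i-k + (t-s) + k = i + (t-s)" using False by linarith+
    ultimately show ?thesis by simp
  qed
qed

lemma eventually_periodic_if_card_factors_Suc_le:
  assumes "card (factors y (Suc k)) \<le> card (factors y k)"
  obtains s P where "1 \<le> P" "\<forall>i\<ge>s. y (i+P) = y i"
proof -
  obtain s t where "1 \<le> s" "s < t" "map y [s..<s+k] = map y [t..<t+k]"
    by (rule repeated_factor[of 1 y k "card (factors y k)"]) auto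
  with periodic_after_repeated_factor[OF assms] that[of "t - s" s] show ?thesis by auto
qed

lemma sturmian_not_eventually_periodic:
  assumes "sturmian x" "1 \<le> P" "\<forall>i\<ge>s. x (i+P) = x i"
  shows False
proof -
  let ?m = "s + P"
  let ?F = "\<lambda>i. map x [i..<i+?m]"
  have "\<exists>i'\<in>{1..s+P}. ?F i = ?F i'" if "1 \<le> i" for i
    using that
  proof (induction i rule: less_induct)
    case (less i)
    show ?case
    proof (cases "i \<le> s + P")
      case False
      have "?F i = ?F (i-P)"
        unfolding map_upt_eq_iff
      proof (intro allI impI)
        fix r
        have "s \<le> (i-P)+r" using False by simp
        then have "x ((i-P)+r+P) = x ((i-P)+r)" using assms(3) by blast
        with False show "x (i+r) = x ((i-P)+r)" by (simp add: algebra_simps)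
      qed
      moreover have "i - P < i" "1 \<le> i - P" using False assms(2) by auto
      ultimately show ?thesis using less.IH by metis
    qed (use less.prems in auto)
  qed
  then have "factors x ?m \<subseteq> ?F ` {1..s+P}"
    unfolding factors_def by (smt (verit) image_iff mem_Collect_eq subsetI)
  then have "card (factors x ?m) \<le> card (?F ` {1..s+P})" by (intro card_mono) auto
  also have "\<dots> \<le> s + P" using card_image_le[of "{1..s+P}" ?F] by simp
  finally have "card (factors x ?m) \<le> s + P" .
  then show False using card_factors_sturmian[OF assms(1), of ?m] by simp
qed

lemma sturmian_recurrent:
  assumes "sturmian x" "1 \<le> i"
  obtains q where "N \<le> q" "\<forall>r<m. x (q+r) = x (i+r)"
proof (rule ccontr)
  assume absent: "\<not> thesis"
  define y where "y t = x (t + N)" for t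
  have map_y: "map y [t..<t+n] = map x [t+N..<t+N+n]" for t n
    by (simp add: y_def list_eq_iff_nth_eq algebra_simps)
  have sub: "factors y m \<subseteq> factors x m - {map x [i..<i+m]}"
  proof
    fix v assume "v \<in> factors y m"
    then obtain t where t: "1 \<le> t" "v = map y [t..<t+m]" by (auto simp: factors_def)
    then show "v \<in> factors x m - {map x [i..<i+m]}"
      using absent that[of "t + N"] by (auto simp: map_y factors_def map_upt_eq_iff)
  qed
  have "card (factors y m) \<le> m"
    using card_mono[OF _ sub] card_factors_sturmian[OF assms(1), of m]
      map_upt_in_factors[OF assms(2), of x m]
    by (simp add: finite_factors)
  have "\<exists>k<m. card (factors y (Suc k)) \<le> card (factors y k)"
  proof (rule ccontr)
    assume grows: "\<not> ?thesis"
    have "k \<le> m \<Longrightarrow> k + 1 \<le> card (factors y k)" for k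
    proof (induction k)
      case (Suc k)
      then have "k < m" by simp
      then have "card (factors y k) < card (factors y (Suc k))" using grows not_le by blast
      with Suc show ?case by simp
    qed (simp add: factors_0)
    then show False using \<open>card (factors y m) \<le> m\<close> by (metis Suc_eq_plus1 le_refl not_less_eq_eq)
  qed
  then obtain k where "card (factors y (Suc k)) \<le> card (factors y k)" by blast
  then obtain s P where P: "1 \<le> P" "\<forall>i\<ge>s. y (i+P) = y i"
    by (rule eventually_periodic_if_card_factors_Suc_le)
  have "x (i+P) = x i" if "s + N \<le> i" for i
    using P(2)[rule_format, of "i - N"] that by (simp add: y_def add.commute add.left_commute)
  then show False using sturmian_not_eventually_periodic[OF assms(1) P(1)] by blast
qed

section \<open>Balance\<close>

definition b_count :: "(nat \<Rightarrow> bool) \<Rightarrow> nat \<Rightarrow> nat \<Rightarrow> int" where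
  "b_count x i n = (\<Sum>t\<in>{i..<i+n}. of_bool (x t))"

lemma b_count_0 [simp]: "b_count x i 0 = 0"
  by (simp add: b_count_def)

lemma b_count_add: "b_count x i (a+b) = b_count x i a + b_count x (i+a) b"
  unfolding b_count_def
  by (subst sum.atLeastLessThan_concat[symmetric, of i "i+a"]) (auto simp: add.assoc)

lemma b_count_Suc: "b_count x i (Suc n) = of_bool (x i) + b_count x (Suc i) n"
  using b_count_add[of x i 1 n] by (simp add: b_count_def)

lemma b_count_Suc_right: "b_count x i (Suc n) = b_count x i n + of_bool (x (i+n))"
  using b_count_add[of x i n 1] by (simp add: b_count_def)

lemma b_count_cong: "(\<And>r. r < n \<Longrightarrow> x (a+r) = x (b+r)) \<Longrightarrow> b_count x a n = b_count x b n"
  by (induction n) (simp_all add: b_count_Suc_right)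

lemma b_count_nonneg: "0 \<le> b_count x i n"
  unfolding b_count_def by (intro sum_nonneg) auto

lemma b_count_le: "b_count x i n \<le> int n"
proof -
  have "b_count x i n \<le> (\<Sum>t\<in>{i..<i+n}. 1)" unfolding b_count_def by (intro sum_mono) auto
  then show ?thesis by simp
qed

definition balanced :: "(nat \<Rightarrow> bool) \<Rightarrow> bool" where
  "balanced x \<longleftrightarrow> (\<forall>i j n. 1 \<le> i \<longrightarrow> 1 \<le> j \<longrightarrow> b_count x i n \<le> b_count x j n + 1)"

text \<open>A shortest pair of windows witnessing imbalance has the shape \<open>b u b\<close> at \<open>i\<close> and
  \<open>a u a\<close> at \<open>j\<close> with \<open>u\<close> a palindrome of length \<open>m\<close>.\<close>

context
  fixes x :: "nat \<Rightarrow> bool" and i j m :: nat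
  assumes starts: "1 \<le> i" "1 \<le> j"
    and gap: "b_count x j (m+2) + 2 \<le> b_count x i (m+2)"
    and shorter_balanced:
      "\<And>n i' j'. n < m+2 \<Longrightarrow> 1 \<le> i' \<Longrightarrow> 1 \<le> j' \<Longrightarrow> b_count x i' n \<le> b_count x j' n + 1"
begin

lemma minimal_unbalanced_first: "x i \<and> \<not> x j"
proof (rule ccontr)
  assume "\<not> (x i \<and> \<not> x j)"
  then have "of_bool (x i) \<le> (of_bool (x j) :: int)" by auto
  moreover have "b_count x (Suc i) (m+1) \<le> b_count x (Suc j) (m+1) + 1"
    by (rule shorter_balanced) simp_all
  moreover have "b_count x p (m+2) = of_bool (x p) + b_count x (Suc p) (m+1)" for p
    using b_count_Suc[of x p "m+1"] by simp
  ultimately show False using gap by (smt (verit))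
qed

lemma minimal_unbalanced_last: "x (i+m+1) \<and> \<not> x (j+m+1)"
proof (rule ccontr)
  assume "\<not> (x (i+m+1) \<and> \<not> x (j+m+1))"
  then have "of_bool (x (i+m+1)) \<le> (of_bool (x (j+m+1)) :: int)" by auto
  moreover have "b_count x i (m+1) \<le> b_count x j (m+1) + 1"
    using starts by (intro shorter_balanced) simp_all
  moreover have "b_count x p (m+2) = b_count x p (m+1) + of_bool (x (p+m+1))" for p
    using b_count_Suc_right[of x p "m+1"] by simp
  ultimately show False using gap by (smt (verit))
qed

lemma minimal_unbalanced_prefix_counts:
  assumes "1 \<le> k" "k \<le> m+1"
  shows "b_count x i k = b_count x j k + 1"
proof -
  have "b_count x i k \<le> b_count x j k + 1"
    using assms starts by (intro shorter_balanced) simp_all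
  moreover have "b_count x (i+k) (m+2-k) \<le> b_count x (j+k) (m+2-k) + 1"
    using assms starts by (intro shorter_balanced) simp_all
  moreover have "b_count x p (m+2) = b_count x p k + b_count x (p+k) (m+2-k)" for p
    using b_count_add[of x p k "m+2-k"] assms by simp
  ultimately show ?thesis using gap by fastforce
qed

lemma minimal_unbalanced_middle:
  assumes "1 \<le> r" "r \<le> m"
  shows "x (j+r) = x (i+r)"
proof -
  have "of_bool (x (j+r)) = (of_bool (x (i+r)) :: int)"
    using minimal_unbalanced_prefix_counts[of r] minimal_unbalanced_prefix_counts[of "Suc r"] assms
    by (simp add: b_count_Suc_right)
  then show ?thesis by (simp add: of_bool_eq_iff)
qed

text \<open>Comparing the first \<open>s+1\<close> letters of one window with the last \<open>s+1\<close> letters of the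
  other, in both directions, forces the prefix and the suffix of length \<open>s\<close> of \<open>u\<close> to
  contain the same number of \<open>b\<close>'s.\<close>

lemma minimal_unbalanced_counts_reversed:
  assumes s: "s \<le> m"
  shows "b_count x (i+1) s = b_count x (i+m+1-s) s"
proof -
  note ends = minimal_unbalanced_first minimal_unbalanced_last
  have front_i: "b_count x i (s+1) = 1 + b_count x (i+1) s"
    using b_count_Suc[of x i s] ends by simp
  have front_j: "b_count x j (s+1) = b_count x (i+1) s"
  proof -
    have "b_count x j (s+1) = b_count x (j+1) s" using b_count_Suc[of x j s] ends by simp
    also have "\<dots> = b_count x (i+1) s"
      using minimal_unbalanced_middle[of "Suc _"] s by (intro b_count_cong) simp
    finally show ?thesis .
  qed
  have back_i: "b_count x (i+m+1-s) (s+1) = b_count x (i+m+1-s) s + 1"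
    using b_count_Suc_right[of x "i+m+1-s" s] ends s by simp
  have back_j: "b_count x (j+m+1-s) (s+1) = b_count x (i+m+1-s) s"
  proof -
    have "b_count x (j+m+1-s) (s+1) = b_count x (j+m+1-s) s"
      using b_count_Suc_right[of x "j+m+1-s" s] ends s by simp
    also have "\<dots> = b_count x (i+m+1-s) s"
    proof (rule b_count_cong)
      fix r assume "r < s"
      then show "x (j+m+1-s+r) = x (i+m+1-s+r)"
        using minimal_unbalanced_middle[of "m+1-s+r"] s by (simp add: algebra_simps)
    qed
    finally show ?thesis .
  qed
  have "b_count x i (s+1) \<le> b_count x (j+m+1-s) (s+1) + 1"
       "b_count x (i+m+1-s) (s+1) \<le> b_count x j (s+1) + 1"
    using s starts by (intro shorter_balanced; simp)+
  then show ?thesis using front_i front_j back_i back_j by linarith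
qed

lemma minimal_unbalanced_palindrome:
  assumes "1 \<le> r" "r \<le> m"
  shows "x (i+r) = x (i+m+1-r)"
proof -
  have "b_count x (i+1) r = b_count x (i+1) (r-1) + of_bool (x (i+r))"
    using b_count_Suc_right[of x "i+1" "r-1"] assms by simp
  moreover have "b_count x (i+m+1-r) r = of_bool (x (i+m+1-r)) + b_count x (i+m+1-(r-1)) (r-1)"
    using b_count_Suc[of x "i+m+1-r" "r-1"] assms by (simp add: Suc_diff_le)
  moreover have "b_count x (i+1) r = b_count x (i+m+1-r) r"
    "b_count x (i+1) (r-1) = b_count x (i+m+1-(r-1)) (r-1)"
    using minimal_unbalanced_counts_reversed assms by auto
  ultimately have "of_bool (x (i+r)) = (of_bool (x (i+m+1-r)) :: int)" by linarith
  then show ?thesis by (simp add: of_bool_eq_iff)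
qed

end

lemma unbalanced_obtains_palindromic_pair:
  assumes "\<not> balanced x"
  obtains i j m where "1 \<le> i" "1 \<le> j" "x i" "\<not> x j" "x (i+m+1)" "\<not> x (j+m+1)"
    "\<And>r. 1 \<le> r \<Longrightarrow> r \<le> m \<Longrightarrow> x (j+r) = x (i+r)"
    "\<And>r. 1 \<le> r \<Longrightarrow> r \<le> m \<Longrightarrow> x (i+r) = x (i+m+1-r)"
proof -
  define P where "P n \<longleftrightarrow> (\<exists>i j. 1 \<le> i \<and> 1 \<le> j \<and> b_count x j n + 2 \<le> b_count x i n)" for n
  have "\<exists>n. P n"
  proof -
    from assms obtain i j n where "1 \<le> i" "1 \<le> j" "b_count x j n + 1 < b_count x i n"
      unfolding balanced_def by (auto simp: not_le)
    then have "P n" unfolding P_def by (intro exI[of _ i] exI[of _ j]) simp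
    then show ?thesis ..
  qed
  then obtain n where "P n" and least: "\<And>n'. n' < n \<Longrightarrow> \<not> P n'"
    using exists_least_iff[of P] by blast
  then obtain i j where ij: "1 \<le> i" "1 \<le> j" "b_count x j n + 2 \<le> b_count x i n"
    unfolding P_def by blast
  have "2 \<le> n"
  proof (rule ccontr)
    assume "\<not> 2 \<le> n"
    then consider "n = 0" | "n = 1" by linarith
    then show False
      using ij(3) b_count_le[of x i 1] b_count_nonneg[of x j 1] by cases auto
  qed
  then obtain m where n: "n = m + 2" by (metis add.commute le_Suc_ex)
  have gap: "b_count x j (m+2) + 2 \<le> b_count x i (m+2)" using ij(3) n by simp
  have shorter: "b_count x i' n' \<le> b_count x j' n' + 1"
    if "n' < m+2" "1 \<le> i'" "1 \<le> j'" for n' i' j'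
    using least[of n'] that n unfolding P_def by fastforce
  note pair = ij(1,2) gap shorter
  show ?thesis
    using minimal_unbalanced_first[OF pair] minimal_unbalanced_last[OF pair]
      minimal_unbalanced_middle[OF pair] minimal_unbalanced_palindrome[OF pair]
    by (intro that[OF ij(1,2)]) auto
qed

section \<open>Sturmian words are balanced\<close>

text \<open>In a Sturmian word \<open>x\<close>, fix a pair as produced by \<open>unbalanced_obtains_palindromic_pair\<close>
  and write \<open>u = window i\<close>; the occurrences of \<open>u\<close> are the \<open>q\<close> with \<open>window q = window i\<close>.\<close>

context
  fixes x :: "nat \<Rightarrow> bool" and i j m :: nat
  assumes sturmian: "sturmian x"
    and starts: "1 \<le> i" "1 \<le> j"
    and ends: "x i" "\<not> x j" "x (i+m+1)" "\<not> x (j+m+1)"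
    and middle: "\<And>r. 1 \<le> r \<Longrightarrow> r \<le> m \<Longrightarrow> x (j+r) = x (i+r)"
    and palindrome: "\<And>r. 1 \<le> r \<Longrightarrow> r \<le> m \<Longrightarrow> x (i+r) = x (i+m+1-r)"
begin

definition window :: "nat \<Rightarrow> bool list" where
  "window q = map x [q+1..<q+1+m]"

lemma window_eq_iff: "window a = window b \<longleftrightarrow> (\<forall>r. 1 \<le> r \<and> r \<le> m \<longrightarrow> x (a+r) = x (b+r))"
proof -
  have "window a = window b \<longleftrightarrow> (\<forall>r<m. x (a+1+r) = x (b+1+r))"
    unfolding window_def by (rule map_upt_eq_iff)
  also have "\<dots> \<longleftrightarrow> (\<forall>r. 1 \<le> r \<and> r \<le> m \<longrightarrow> x (a+r) = x (b+r))"
  proof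
    assume shifted: "\<forall>r<m. x (a+1+r) = x (b+1+r)"
    show "\<forall>r. 1 \<le> r \<and> r \<le> m \<longrightarrow> x (a+r) = x (b+r)"
    proof (intro allI impI)
      fix r assume r: "1 \<le> r \<and> r \<le> m"
      then have "r - 1 < m" by linarith
      from shifted[rule_format, OF this] r show "x (a+r) = x (b+r)" by simp
    qed
  next
    assume pointwise: "\<forall>r. 1 \<le> r \<and> r \<le> m \<longrightarrow> x (a+r) = x (b+r)"
    show "\<forall>r<m. x (a+1+r) = x (b+1+r)"
    proof (intro allI impI)
      fix r assume "r < m"
      then have "1 \<le> r+1 \<and> r+1 \<le> m" by simp
      from pointwise[rule_format, OF this] show "x (a+1+r) = x (b+1+r)" by simp
    qed
  qed
  finally show ?thesis .
qed

lemma window_j_eq_window_i: "window j = window i"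
  using middle by (simp add: window_eq_iff)

lemma window_snoc_in_factors: "window q @ [x (q+m+1)] \<in> factors x (Suc m)"
  using map_upt_in_factors[of "q+1" x "Suc m"] by (simp add: window_def)

lemma window_cons_snoc_in_factors:
  assumes "1 \<le> q" "window q = window i"
  shows "(x q # window i) @ [x (q+m+1)] \<in> factors x (Suc (Suc m))"
proof -
  have "[q..<q+Suc (Suc m)] = [q..<q+1+m] @ [q+1+m]" by simp
  also have "[q..<q+1+m] = q # [q+1..<q+1+m]" by (simp add: upt_conv_Cons)
  finally have "map x [q..<q+Suc (Suc m)] = (x q # window q) @ [x (q+m+1)]"
    by (simp add: window_def add.commute add.left_commute)
  with map_upt_in_factors[OF assms(1)] assms(2) show ?thesis by metis
qed

text \<open>Both \<open>u b\<close> and \<open>u a\<close> are factors, where \<open>u = window i\<close>, so \<open>u\<close> is the right special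
  factor of length \<open>m\<close>; every other factor of that length extends in only one way.\<close>

lemma window_right_extension_unique:
  assumes "window q1 = window q2" "window q1 \<noteq> window i"
  shows "x (q1+m+1) = x (q2+m+1)"
proof (rule ccontr)
  assume "x (q1+m+1) \<noteq> x (q2+m+1)"
  then have "window q1 @ [True] \<in> factors x (Suc m)" "window q1 @ [False] \<in> factors x (Suc m)"
    using window_snoc_in_factors[of q1] window_snoc_in_factors[of q2] assms(1)
    by (cases "x (q1+m+1)"; auto)+
  moreover have "window i @ [True] \<in> factors x (Suc m)" "window i @ [False] \<in> factors x (Suc m)"
    using window_snoc_in_factors[of i] window_snoc_in_factors[of j] window_j_eq_window_i ends
    by auto
  ultimately show False
    using sturmian_right_special_unique[OF sturmian] assms(2) by blast
qed

text \<open>If \<open>a u b\<close> and \<open>b u a\<close> were both factors, then \<open>a u\<close> and \<open>b u\<close> would be two right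
  special factors of length \<open>m+1\<close>.\<close>

lemma no_two_mixed_occurrences:
  assumes "1 \<le> q1" "window q1 = window i" "\<not> x q1" "x (q1+m+1)"
    and "1 \<le> q2" "window q2 = window i" "x q2" "\<not> x (q2+m+1)"
  shows False
proof -
  have "(False # window i) @ [True] \<in> factors x (Suc (Suc m))"
    "(False # window i) @ [False] \<in> factors x (Suc (Suc m))"
    "(True # window i) @ [True] \<in> factors x (Suc (Suc m))"
    "(True # window i) @ [False] \<in> factors x (Suc (Suc m))"
    using window_cons_snoc_in_factors[OF assms(1,2)]
      window_cons_snoc_in_factors[OF starts(2) window_j_eq_window_i]
      window_cons_snoc_in_factors[OF starts(1) refl] window_cons_snoc_in_factors[OF assms(5,6)]
      assms ends by auto
  then show False using sturmian_right_special_unique[OF sturmian] by blast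
qed

lemma window_agreement_propagates:
  assumes "window q1 = window q2" "\<And>e. e < d \<Longrightarrow> window (q2+e) \<noteq> window i"
  shows "window (q1+d) = window (q2+d)"
  using assms(2)
proof (induction d)
  case (Suc d)
  then have same: "window (q1+d) = window (q2+d)" and "window (q1+d) \<noteq> window i" by auto
  then have last: "x (q1+d+m+1) = x (q2+d+m+1)" by (rule window_right_extension_unique)
  show ?case
    unfolding window_eq_iff
  proof (intro allI impI)
    fix r assume r: "1 \<le> r \<and> r \<le> m"
    show "x (q1 + Suc d + r) = x (q2 + Suc d + r)"
    proof (cases "r = m")
      case False
      then have "1 \<le> r+1 \<and> r+1 \<le> m" using r by simp
      with same show ?thesis unfolding window_eq_iff by fastforce
    qed (use last in simp)
  qed
qed (use assms(1) in simp)

text \<open>A gap longer than \<open>m\<close> contains two equal windows, and their agreement propagates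
  up to an occurrence strictly inside the gap.\<close>

lemma occurrence_in_long_gap:
  assumes "window p' = window i" "p + m + 1 < p'"
  shows "\<exists>q. p < q \<and> q < p' \<and> window q = window i"
proof (rule ccontr)
  assume "\<not> ?thesis"
  then have none: "window q \<noteq> window i" if "p < q" "q < p'" for q
    using that by blast
  obtain s t where st: "p + 1 \<le> s" "s < t" "t \<le> p + 1 + (m + 1)"
    "map x [s..<s+m] = map x [t..<t+m]"
    using repeated_factor[of "p+1" x m "m+1"] card_factors_sturmian[OF sturmian, of m] by auto
  define q1 q2 where "q1 = s - 1" and "q2 = t - 1"
  have q: "p \<le> q1" "q1 < q2" "q2 \<le> p + m + 1" "window q1 = window q2"
    using st by (auto simp: q1_def q2_def window_def)
  have "window (q1 + (p' - q2)) = window (q2 + (p' - q2))"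
  proof (rule window_agreement_propagates)
    show "window (q2 + e) \<noteq> window i" if "e < p' - q2" for e
      using none[of "q2 + e"] q that by linarith
  qed (fact q(4))
  then have "window (q1 + (p' - q2)) = window i" using q assms by simp
  moreover have "p < q1 + (p' - q2)" "q1 + (p' - q2) < p'" using q assms(2) by auto
  ultimately show False using none by blast
qed

text \<open>The letter following an occurrence of \<open>u\<close> equals the letter preceding the next
  occurrence: if the two overlap, by the palindrome property.\<close>

lemma letter_before_next_occurrence:
  assumes p: "window p = window i" "window p' = window i" "p < p'"
    and none: "\<And>q. p < q \<Longrightarrow> q < p' \<Longrightarrow> window q \<noteq> window i"
  shows "x p' = x (p+m+1)"
proof -
  consider "p' - p \<le> m" | "p' = p+m+1" | "p + m + 1 < p'" by linarith
  then show ?thesis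
  proof cases
    case 1
    define l where "l = p' - p"
    have l: "1 \<le> l" "l \<le> m" "p' = p + l" using 1 p(3) by (auto simp: l_def)
    have "x (p+l) = x (i+l)" using p(1) l unfolding window_eq_iff by blast
    moreover have "1 \<le> m+1-l" "m+1-l \<le> m" using l by linarith+
    then have "x (p' + (m+1-l)) = x (i + (m+1-l))" using p(2) unfolding window_eq_iff by blast
    moreover have "p' + (m+1-l) = p+m+1" "i + (m+1-l) = i+m+1-l" using l by auto
    ultimately show ?thesis using palindrome[OF l(1,2)] l(3) by metis
  next
    case 3
    then show ?thesis using occurrence_in_long_gap[OF p(2)] none by blast
  qed simp
qed

lemma occurrences_keep_preceding_letter:
  assumes p0: "1 \<le> p0" "window p0 = window i" "x p0 = c" "x (p0+m+1) = c"
    and keep: "\<And>q. 1 \<le> q \<Longrightarrow> window q = window i \<Longrightarrow> x q = c \<Longrightarrow> x (q+m+1) = c"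
    and p1: "1 \<le> p1" "window p1 = window i" "x p1 \<noteq> c"
  shows False
proof -
  have after_p0: "x q = c" if "p0 < q" "window q = window i" for q
    using that
  proof (induction q rule: less_induct)
    case (less q)
    define S where "S = {q'. p0 \<le> q' \<and> q' < q \<and> window q' = window i}"
    define q0 where "q0 = Max S"
    have "finite S" "p0 \<in> S" using less.prems p0(2) by (auto simp: S_def)
    then have "q0 \<in> S" and q0_ge: "\<And>q'. q' \<in> S \<Longrightarrow> q' \<le> q0"
      unfolding q0_def using Max_in by auto
    then have q0: "p0 \<le> q0" "q0 < q" "window q0 = window i" by (auto simp: S_def)
    have q0_max: "window q' \<noteq> window i" if "q0 < q'" "q' < q" for q'
      using q0_ge[of q'] that q0 by (force simp: S_def)
    have "x q = x (q0+m+1)"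
      using letter_before_next_occurrence[OF q0(3) less.prems(2) q0(2) q0_max] .
    moreover have "x (q0+m+1) = c"
      using less.IH[of q0] q0 keep[of q0] p0 by (cases "q0 = p0") auto
    ultimately show ?case by simp
  qed
  obtain q where q: "Suc p0 \<le> q" "\<forall>r<m+2. x (q+r) = x (p1+r)"
    using sturmian_recurrent[OF sturmian p1(1)] by blast
  then have "window q = window i" using p1(2) by (auto simp: window_eq_iff)
  moreover have "x q = x p1" using q(2)[rule_format, of 0] by simp
  ultimately show False using after_p0[of q] q(1) p1(3) by simp
qed

lemma palindromic_pair_contradiction: False
proof (cases "\<forall>q. 1 \<le> q \<longrightarrow> window q = window i \<longrightarrow> x q \<longrightarrow> x (q+m+1)")
  case True
  then show False
    using occurrences_keep_preceding_letter[of i True j] starts ends window_j_eq_window_i by auto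
next
  case False
  then obtain q2 where "1 \<le> q2" "window q2 = window i" "x q2" "\<not> x (q2+m+1)" by blast
  then have "\<forall>q. 1 \<le> q \<longrightarrow> window q = window i \<longrightarrow> \<not> x q \<longrightarrow> \<not> x (q+m+1)"
    using no_two_mixed_occurrences by blast
  then show False
    using occurrences_keep_preceding_letter[of j False i] starts ends window_j_eq_window_i by auto
qed

end

theorem sturmian_balanced:
  assumes "sturmian x"
  shows "balanced x"
proof (rule ccontr)
  assume "\<not> balanced x"
  then obtain i j m where "1 \<le> i" "1 \<le> j" "x i" "\<not> x j" "x (i+m+1)" "\<not> x (j+m+1)"
    "\<And>r. 1 \<le> r \<Longrightarrow> r \<le> m \<Longrightarrow> x (j+r) = x (i+r)"
    "\<And>r. 1 \<le> r \<Longrightarrow> r \<le> m \<Longrightarrow> x (i+r) = x (i+m+1-r)"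
    by (rule unbalanced_obtains_palindromic_pair) blast
  from palindromic_pair_contradiction[OF assms this] show False .
qed

section \<open>Letter frequency\<close>

lemma b_count_1_eq_card: "b_count x 1 n = int (card {j. 1 \<le> j \<and> j \<le> n \<and> x j})"
proof -
  have "b_count x 1 n = (\<Sum>t\<in>{t\<in>{1..<1+n}. x t}. 1)"
    unfolding b_count_def by (subst sum.inter_filter) (simp_all add: of_bool_def)
  also have "{t\<in>{1..<1+n}. x t} = {j. 1 \<le> j \<and> j \<le> n \<and> x j}" by auto
  finally show ?thesis by simp
qed

lemma b_freq_eq_b_count: "b_freq x n = b_count x 1 n / n"
  unfolding b_freq_def b_count_1_eq_card by simp

lemma balanced_b_count_mult:
  assumes "balanced x"
  shows "\<bar>b_count x 1 (k*n) - int k * b_count x 1 n\<bar> \<le> int k"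
proof (induction k)
  case (Suc k)
  have "b_count x 1 (Suc k * n) = b_count x 1 (k*n) + b_count x (1 + k*n) n"
    using b_count_add[of x 1 "k*n" n] by (simp add: add.commute)
  moreover have "b_count x (1+k*n) n \<le> b_count x 1 n + 1" "b_count x 1 n \<le> b_count x (1+k*n) n + 1"
    using assms unfolding balanced_def by auto
  ultimately show ?case using Suc.IH by (simp add: algebra_simps abs_le_iff)
qed simp

lemma convergent_with_rate_if_dist_le:
  fixes f :: "nat \<Rightarrow> real"
  assumes close: "\<And>m n. 1 \<le> m \<Longrightarrow> 1 \<le> n \<Longrightarrow> \<bar>f m - f n\<bar> \<le> 1/m + 1/n"
  obtains L where "f \<longlonglongrightarrow> L" "\<And>n. 1 \<le> n \<Longrightarrow> \<bar>f n - L\<bar> \<le> 1/n"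
proof -
  have "Cauchy f"
  proof (rule metric_CauchyI)
    fix e :: real assume "e > 0"
    then obtain M :: nat where M: "2 / e < M" using reals_Archimedean2 by blast
    then have "0 < real M" using \<open>e > 0\<close> by (smt (verit) divide_pos_pos)
    then have "1 \<le> M" by (simp add: Suc_le_eq)
    have "dist (f m) (f n) < e" if "M \<le> m" "M \<le> n" for m n
    proof -
      have "dist (f m) (f n) \<le> 1/m + 1/n"
        using close[of m n] that \<open>1 \<le> M\<close> by (simp add: dist_real_def)
      also have "\<dots> \<le> 1/M + 1/M"
        using that \<open>1 \<le> M\<close> by (intro add_mono) (simp_all add: frac_le)
      also have "\<dots> < e" using M \<open>e > 0\<close> \<open>1 \<le> M\<close> by (simp add: field_simps)
      finally show ?thesis .
    qed
    then show "\<exists>M. \<forall>m\<ge>M. \<forall>n\<ge>M. dist (f m) (f n) < e" by blast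
  qed
  then obtain L where lim: "f \<longlonglongrightarrow> L" using Cauchy_convergent_iff convergent_def by blast
  have "\<bar>f n - L\<bar> \<le> 1/n" if "1 \<le> n" for n
  proof (rule tendsto_le[OF trivial_limit_sequentially])
    show "(\<lambda>m. \<bar>f n - f m\<bar>) \<longlonglongrightarrow> \<bar>f n - L\<bar>" by (intro tendsto_intros lim)
    show "(\<lambda>m. 1/n + 1/real m) \<longlonglongrightarrow> 1/n"
      using tendsto_add[OF tendsto_const lim_inverse_n'] by simp
    show "\<forall>\<^sub>F m in sequentially. \<bar>f n - f m\<bar> \<le> 1/n + 1/real m"
      using close[OF that] by (intro eventually_sequentiallyI[of 1]) simp
  qed
  with lim that show ?thesis by blast
qed

text \<open>Balance makes \<open>b_count x 1 n / n\<close> a Cauchy sequence: comparing the counts of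
  \<open>m n\<close> letters split into \<open>m\<close> blocks of length \<open>n\<close> and into \<open>n\<close> blocks of length \<open>m\<close>
  gives \<open>|f n - f m| \<le> 1/n + 1/m\<close>.\<close>

lemma balanced_frequency:
  assumes "balanced x"
  obtains \<beta> :: real where "b_freq x \<longlonglongrightarrow> \<beta>" "0 \<le> \<beta>" "\<beta> \<le> 1"
    "\<And>n. \<bar>b_count x 1 n - \<beta> * n\<bar> \<le> 1"
proof -
  define f where "f n = b_freq x n" for n
  have f_eq: "f n = b_count x 1 n / n" for n by (simp add: f_def b_freq_eq_b_count)
  have "\<bar>f n - f m\<bar> \<le> 1/n + 1/m" if "1 \<le> n" "1 \<le> m" for n m
  proof -
    define c where "c = real_of_int (b_count x 1 (m*n))"
    have "real_of_int \<bar>b_count x 1 (k*l) - int k * b_count x 1 l\<bar> \<le> real_of_int (int k)" for k l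
      using balanced_b_count_mult[OF assms, of k l] by (simp only: of_int_le_iff)
    from this[of m n] this[of n m]
    have "\<bar>c - m * b_count x 1 n\<bar> \<le> m" "\<bar>c - n * b_count x 1 m\<bar> \<le> n"
      unfolding c_def by (simp_all add: mult.commute)
    moreover have "c / (m*n) - f n = (c - m * b_count x 1 n) / (m*n)"
      "c / (m*n) - f m = (c - n * b_count x 1 m) / (m*n)"
      using that by (simp_all add: f_eq field_simps)
    ultimately have "\<bar>c / (m*n) - f n\<bar> \<le> 1/n" "\<bar>c / (m*n) - f m\<bar> \<le> 1/m"
      using that by (simp_all add: abs_divide divide_le_eq mult.commute)
    then show ?thesis by simp
  qed
  then obtain \<beta> where lim: "f \<longlonglongrightarrow> \<beta>" and rate: "\<And>n. 1 \<le> n \<Longrightarrow> \<bar>f n - \<beta>\<bar> \<le> 1/n"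
    using convergent_with_rate_if_dist_le by blast
  have f01: "0 \<le> f n" "f n \<le> 1" for n
    using b_count_nonneg[of x 1 n] b_count_le[of x 1 n] by (simp_all add: f_eq divide_le_eq)
  have "\<bar>b_count x 1 n - \<beta> * n\<bar> \<le> 1" for n
  proof (cases "n = 0")
    case False
    then have "b_count x 1 n - \<beta> * n = n * (f n - \<beta>)" by (simp add: f_eq field_simps)
    then have "\<bar>b_count x 1 n - \<beta> * n\<bar> = n * \<bar>f n - \<beta>\<bar>" by (simp add: abs_mult)
    also have "\<dots> \<le> n * (1/n)" using rate[of n] False by (intro mult_left_mono) auto
    finally show ?thesis using False by simp
  qed simp
  moreover have "0 \<le> \<beta>" "\<beta> \<le> 1"
    using tendsto_lowerbound[OF lim] tendsto_upperbound[OF lim] f01 by auto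
  ultimately show ?thesis using that lim unfolding f_def by blast
qed

section \<open>The mollified average\<close>

text \<open>The Dirichlet coefficients of \<open>(1 - 2^(1-s)) \<zeta>(s)\<close>.\<close>

definition alt_sign :: "nat \<Rightarrow> real" where
  "alt_sign m = (if odd m then 1 else -1)"

lemma D_w_eq_sum_alt_sign:
  assumes "1 \<le> n"
  shows "real_of_int (D_w w n) = (\<Sum>d\<in>{d. d dvd n \<and> w d}. alt_sign (n div d))"
proof -
  let ?A = "{d. d dvd n \<and> w d}"
  have "finite ?A" using assms by (auto intro: finite_subset[of _ "{..n}"] dvd_imp_le)
  then have "(\<Sum>d\<in>?A. alt_sign (n div d)) =
      real (card {d\<in>?A. odd (n div d)}) - real (card {d\<in>?A. \<not> odd (n div d)})"
    by (simp add: alt_sign_def sum.If_cases Int_def)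
  moreover have "{d\<in>?A. odd (n div d)} = {d. d dvd n \<and> w d \<and> odd (n div d)}"
    and "{d\<in>?A. \<not> odd (n div d)} = {d. d dvd n \<and> w d \<and> even (n div d)}" by auto
  ultimately show ?thesis by (simp add: D_w_def o_w_def e_w_def)
qed

lemma sum_divisors_swap:
  fixes f :: "nat \<Rightarrow> nat \<Rightarrow> 'a::comm_monoid_add"
  shows "(\<Sum>n\<in>{1..N}. \<Sum>d\<in>{d. d dvd n}. f d (n div d)) = (\<Sum>m\<in>{1..N}. \<Sum>d\<in>{1..N div m}. f d m)"
proof -
  have "(\<Sum>n\<in>{1..N}. \<Sum>d\<in>{d. d dvd n}. f d (n div d)) =
      (\<Sum>(n, d)\<in>Sigma {1..N} (\<lambda>n. {d. d dvd n}). f d (n div d))"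
    by (rule sum.Sigma) (auto intro: finite_subset[of _ "{.._}"] dvd_imp_le)
  also have "\<dots> = (\<Sum>(m, d)\<in>Sigma {1..N} (\<lambda>m. {1..N div m}). f d m)"
  proof (rule sum.reindex_bij_witness
      [where i = "\<lambda>(m, d). (d*m, d)" and j = "\<lambda>(n, d). (n div d, d)"])
    fix a assume "a \<in> Sigma {1..N} (\<lambda>n. {d. d dvd n})"
    then obtain n d where a: "a = (n, d)" "1 \<le> n" "n \<le> N" "d dvd n" by auto
    have "0 < d" using a by (metis dvd_0_left_iff gr0I not_one_le_zero)
    have dn: "d * (n div d) = n" using a(4) by simp
    have "0 < n div d" using a \<open>0 < d\<close> by (simp add: div_greater_zero_iff dvd_imp_le)
    moreover have "d \<le> N div (n div d)"
      using dn a(3) \<open>0 < n div d\<close> by (metis div_le_mono nonzero_mult_div_cancel_right not_gr0)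
    ultimately show "(case (case a of (n, d) \<Rightarrow> (n div d, d)) of (m, d) \<Rightarrow> (d * m, d)) = a"
      "(case a of (n, d) \<Rightarrow> (n div d, d)) \<in> Sigma {1..N} (\<lambda>m. {1..N div m})"
      "(case (case a of (n, d) \<Rightarrow> (n div d, d)) of (m, d) \<Rightarrow> f d m) =
        (case a of (n, d) \<Rightarrow> f d (n div d))"
      using a dn by (auto intro: order_trans[OF div_le_dividend])
  next
    fix b assume "b \<in> Sigma {1..N} (\<lambda>m. {1..N div m})"
    then obtain m d where b: "b = (m, d)" "1 \<le> m" "1 \<le> d" "d \<le> N div m" by auto
    then have "d * m \<le> N" by (metis div_le_mono le_trans mult_le_mono1 div_times_less_eq_dividend)
    with b show "(case (case b of (m, d) \<Rightarrow> (d * m, d)) of (n, d) \<Rightarrow> (n div d, d)) = b"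
      "(case b of (m, d) \<Rightarrow> (d * m, d)) \<in> Sigma {1..N} (\<lambda>n. {d. d dvd n})" by auto
  qed
  also have "\<dots> = (\<Sum>m\<in>{1..N}. \<Sum>d\<in>{1..N div m}. f d m)"
    by (rule sum.Sigma[symmetric]) auto
  finally show ?thesis .
qed

text \<open>\<open>b_integral w Y\<close> is the integral over \<open>[0, Y]\<close> of the number of positions \<open>j \<le> t\<close>
  with \<open>w j\<close>.\<close>

definition b_integral :: "(nat \<Rightarrow> bool) \<Rightarrow> real \<Rightarrow> real" where
  "b_integral w Y = (\<Sum>j\<in>{1..nat \<lfloor>Y\<rfloor>}. of_bool (w j) * (Y - j))"

lemma nat_floor_divide_of_nat:
  assumes "0 \<le> x"
  shows "nat \<lfloor>x / real m\<rfloor> = nat \<lfloor>x\<rfloor> div m"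
  using floor_divide_real_eq_div[of "int m" x] assms by (simp add: nat_div_distrib)

lemma M_w_eq_sum_b_integral:
  assumes "0 < x"
  shows "M_w w x = (\<Sum>m\<in>{1..nat \<lfloor>x\<rfloor>}. alt_sign m * (b_integral w (x/m) / (x/m)))"
proof -
  define N where "N = nat \<lfloor>x\<rfloor>"
  define f where "f d m = of_bool (w d) * alt_sign m * (1 - real (d*m) / x)" for d m
  have "M_w w x = (\<Sum>n\<in>{1..N}. \<Sum>d\<in>{d. d dvd n}. f d (n div d))"
    unfolding M_w_def N_def[symmetric]
  proof (rule sum.cong[OF refl])
    fix n assume "n \<in> {1..N}"
    then have "finite {d. d dvd n}" by (auto intro: finite_subset[of _ "{..n}"] dvd_imp_le)
    have "(\<Sum>d\<in>{d. d dvd n}. f d (n div d)) =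
        (\<Sum>d\<in>{d. d dvd n}. if w d then (1 - n / x) * alt_sign (n div d) else 0)"
      by (intro sum.cong) (auto simp: f_def)
    also have "\<dots> = (1 - n / x) * (\<Sum>d\<in>{d. d dvd n \<and> w d}. alt_sign (n div d))"
      using sum.inter_filter[OF \<open>finite {d. d dvd n}\<close>, where P = w
        and g = "\<lambda>d. (1 - n / x) * alt_sign (n div d)"] by (simp add: sum_distrib_left)
    finally have "(\<Sum>d\<in>{d. d dvd n}. f d (n div d)) =
        (1 - n / x) * (\<Sum>d\<in>{d. d dvd n \<and> w d}. alt_sign (n div d))" .
    then show "(1 - real n / x) * real_of_int (D_w w n) = (\<Sum>d\<in>{d. d dvd n}. f d (n div d))"
      using D_w_eq_sum_alt_sign \<open>n \<in> {1..N}\<close> by simp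
  qed
  also have "\<dots> = (\<Sum>m\<in>{1..N}. \<Sum>d\<in>{1..N div m}. f d m)"
    by (rule sum_divisors_swap)
  also have "\<dots> = (\<Sum>m\<in>{1..N}. alt_sign m * (b_integral w (x/m) / (x/m)))"
  proof (rule sum.cong[OF refl])
    fix m assume "m \<in> {1..N}"
    then have "N div m = nat \<lfloor>x/m\<rfloor>" "x / m > 0"
      using nat_floor_divide_of_nat[of x m] assms by (auto simp: N_def)
    have "(\<Sum>d\<in>{1..N div m}. f d m) =
        (\<Sum>d\<in>{1..N div m}. alt_sign m / (x/m) * (of_bool (w d) * (x/m - d)))"
      using \<open>m \<in> {1..N}\<close> assms by (intro sum.cong) (simp_all add: f_def field_simps)
    also have "\<dots> = alt_sign m / (x/m) * b_integral w (x/m)"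
      unfolding b_integral_def \<open>N div m = nat \<lfloor>x/m\<rfloor>\<close> by (rule sum_distrib_left[symmetric])
    finally show "(\<Sum>d\<in>{1..N div m}. f d m) = alt_sign m * (b_integral w (x/m) / (x/m))"
      by simp
  qed
  finally show ?thesis by (simp add: N_def)
qed

lemma b_integral_on_unit_interval:
  assumes "real k \<le> Y" "Y \<le> real k + 1"
  shows "b_integral w Y = (\<Sum>j\<in>{1..k}. of_bool (w j) * (Y - j))"
proof (cases "Y = real k + 1")
  case True
  then have "nat \<lfloor>Y\<rfloor> = Suc k" by simp
  then show ?thesis using True by (simp add: b_integral_def)
next
  case False
  with assms have "nat \<lfloor>Y\<rfloor> = k" by linarith
  then show ?thesis by (simp add: b_integral_def)
qed

lemma lipschitz_if_lipschitz_on_unit_intervals: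
  fixes f :: "real \<Rightarrow> real"
  assumes local: "\<And>k y z. real k \<le> y \<Longrightarrow> y \<le> z \<Longrightarrow> z \<le> real k + 1 \<Longrightarrow> \<bar>f z - f y\<bar> \<le> L * (z - y)"
    and "0 \<le> y" "y \<le> z"
  shows "\<bar>f z - f y\<bar> \<le> L * (z - y)"
  using assms(2,3)
proof (induction "nat \<lfloor>z\<rfloor> - nat \<lfloor>y\<rfloor>" arbitrary: y)
  case 0
  then have "z \<le> real (nat \<lfloor>y\<rfloor>) + 1" "real (nat \<lfloor>y\<rfloor>) \<le> y" by linarith+
  with 0 show ?case using local by blast
next
  case (Suc n)
  define y' where "y' = real (nat \<lfloor>y\<rfloor>) + 1"
  have y': "y \<le> y'" "y' \<le> z" "nat \<lfloor>z\<rfloor> - nat \<lfloor>y'\<rfloor> = n" "0 \<le> y'"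
    using Suc.prems Suc.hyps(2) unfolding y'_def by linarith+
  have "\<bar>f z - f y'\<bar> \<le> L * (z - y')" using Suc.hyps(1)[OF y'(3)[symmetric] y'(4,2)] .
  moreover have "\<bar>f y' - f y\<bar> \<le> L * (y' - y)"
    using local[of "nat \<lfloor>y\<rfloor>" y y'] Suc.prems y'(1) unfolding y'_def by linarith
  ultimately show ?case by (smt (verit, ccfv_SIG) distrib_left)
qed

lemma abs_sum_alt_sign_div_minus_ln2:
  "\<bar>(\<Sum>m\<in>{1..N}. alt_sign m / m) - ln 2\<bar> \<le> 1 / (N + 1)"
proof -
  define a where "a i = 1 / real (Suc i)" for i
  define P where "P n = (\<Sum>i<n. (-1)^i * a i)" for n
  have "a \<longlonglongrightarrow> 0" unfolding a_def using lim_inverse_n' LIMSEQ_Suc by blast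
  moreover have "0 \<le> a n" "a (Suc n) \<le> a n" for n by (simp_all add: a_def frac_le)
  ultimately have leibniz: "P (2*n) \<le> (\<Sum>i. (-1)^i * a i)" "(\<Sum>i. (-1)^i * a i) \<le> P (2*n+1)" for n
    using summable_Leibniz'(2,4)[of a] unfolding P_def by blast+
  have "(\<lambda>i. (-1)^i * a i) = (\<lambda>k. (-1)^k / real (Suc k))" by (simp add: a_def fun_eq_iff)
  then have ln2: "(\<Sum>i. (-1)^i * a i) = ln 2"
    using sums_unique[OF alternating_harmonic_series_sums] by simp
  have "(\<Sum>m\<in>{1..N}. alt_sign m / m) = P N"
    by (induction N) (simp_all add: P_def a_def alt_sign_def)
  moreover have "P (Suc n) = P n + (-1)^n * a n" for n by (simp add: P_def)
  moreover have "a N = 1 / (N + 1)" by (simp add: a_def)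
  ultimately show ?thesis
  proof (cases "even N")
    case True
    then obtain n where "N = 2*n" by blast
    with leibniz[of n] ln2 \<open>P (Suc N) = P N + (-1)^N * a N\<close> \<open>a N = 1 / (N + 1)\<close>
      \<open>(\<Sum>m\<in>{1..N}. alt_sign m / m) = P N\<close> show ?thesis by (simp add: abs_le_iff add.commute)
  next
    case False
    then obtain n where "N = 2*n+1" using oddE by blast
    with leibniz[of n] leibniz[of "Suc n"] ln2 \<open>P (Suc N) = P N + (-1)^N * a N\<close>
      \<open>a N = 1 / (N + 1)\<close> \<open>(\<Sum>m\<in>{1..N}. alt_sign m / m) = P N\<close>
    show ?thesis by (simp add: abs_le_iff)
  qed
qed

lemma sum_alt_sign_pairs:
  "(\<Sum>m\<in>{1..2*n}. alt_sign m * g m) = (\<Sum>k\<in>{1..n}. g (2*k-1) - g (2*k))"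
proof (induction n)
  case (Suc n)
  have "{1..2 * Suc n} = insert (Suc (Suc (2*n))) (insert (Suc (2*n)) {1..2*n})" by auto
  with Suc show ?case by (simp add: alt_sign_def)
qed simp

lemma abs_sum_alt_sign_le:
  "\<bar>\<Sum>m\<in>{1..N}. alt_sign m * g m\<bar> \<le> (\<Sum>k\<in>{1..N div 2}. \<bar>g (2*k-1) - g (2*k)\<bar>) + \<bar>g N\<bar>"
proof -
  have pairs: "\<bar>\<Sum>m\<in>{1..2*n}. alt_sign m * g m\<bar> \<le> (\<Sum>k\<in>{1..n}. \<bar>g (2*k-1) - g (2*k)\<bar>)" for n
    unfolding sum_alt_sign_pairs by (rule sum_abs)
  show ?thesis
  proof (cases "even N")
    case True
    then show ?thesis using pairs[of "N div 2"] by (auto elim!: evenE)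
  next
    case False
    then obtain n where n: "N = 2*n+1" by (metis oddE)
    then have split: "(\<Sum>m\<in>{1..N}. alt_sign m * g m) = (\<Sum>m\<in>{1..2*n}. alt_sign m * g m) + g N"
      by (simp add: alt_sign_def)
    have half: "N div 2 = n" using n by simp
    show ?thesis unfolding split half
      using pairs[of n] abs_triangle_ineq[of "\<Sum>m\<in>{1..2*n}. alt_sign m * g m" "g N"] by linarith
  qed
qed

lemma harm_le_ln_plus_1:
  assumes "real n \<le> x" "1 \<le> x"
  shows "harm n \<le> ln x + 1"
proof (cases "n = 0")
  case False
  then have "harm n \<le> ln n + (1::real)"
    using euler_mascheroni_sequence_decreasing[of 1 n] by (simp add: harm_def)
  moreover have "ln n \<le> ln x" using False assms(1) by (intro ln_mono) auto
  ultimately show ?thesis by simp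
qed (use assms(2) in \<open>simp add: harm_def\<close>)

lemma abs_quotient_diff_le:
  fixes R1 R2 Y1 Y2 c :: real
  assumes "0 < Y1" "Y1 \<le> Y2" "\<bar>R2 - R1\<bar> \<le> c * (Y2 - Y1)" "\<bar>R1\<bar> \<le> c * Y1"
  shows "\<bar>R2 / Y2 - R1 / Y1\<bar> \<le> 2 * c * ((Y2 - Y1) / Y2)"
proof -
  have pos: "0 < Y1 * Y2" using assms(1,2) by simp
  have eq: "R2 / Y2 - R1 / Y1 = ((R2 - R1) * Y1 - R1 * (Y2 - Y1)) / (Y1 * Y2)"
    using assms(1,2) by (simp add: field_simps)
  have "\<bar>(R2 - R1) * Y1\<bar> \<le> c * (Y2 - Y1) * Y1" "\<bar>R1 * (Y2 - Y1)\<bar> \<le> c * Y1 * (Y2 - Y1)"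
    using assms by (simp_all add: abs_mult mult_right_mono)
  then have "\<bar>(R2 - R1) * Y1 - R1 * (Y2 - Y1)\<bar> \<le> 2 * c * (Y2 - Y1) * Y1"
    using abs_triangle_ineq4[of "(R2 - R1) * Y1" "R1 * (Y2 - Y1)"] by (simp add: algebra_simps)
  from divide_right_mono[OF this, of "Y1 * Y2"] pos
  have "\<bar>R2 / Y2 - R1 / Y1\<bar> \<le> 2 * c * (Y2 - Y1) * Y1 / (Y1 * Y2)"
    unfolding eq abs_divide abs_of_pos[OF pos] by simp
  also have "\<dots> = 2 * c * ((Y2 - Y1) / Y2)" using assms(1) by simp
  finally show ?thesis .
qed

lemma main_term_error_bound:
  fixes \<beta> x :: real
  assumes "\<bar>\<beta>\<bar> \<le> 1" "1 \<le> x"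
  shows "\<bar>\<beta> * x / 2 * ((\<Sum>m\<in>{1..nat \<lfloor>x\<rfloor>}. alt_sign m / m) - ln 2)\<bar> \<le> 1/2"
proof -
  define N where "N = nat \<lfloor>x\<rfloor>"
  have "x < real N + 1" using assms(2) unfolding N_def by linarith
  let ?S = "\<Sum>m\<in>{1..N}. alt_sign m / m"
  have "\<bar>\<beta> * x / 2 * (?S - ln 2)\<bar> = \<bar>\<beta>\<bar> * (x / 2) * \<bar>?S - ln 2\<bar>"
    using assms by (simp add: abs_mult)
  also have "\<dots> \<le> 1 * (x / 2) * (1 / (N + 1))"
    using assms abs_sum_alt_sign_div_minus_ln2[of N]
    by (intro mult_mono) (simp_all add: add.commute)
  also have "\<dots> \<le> 1/2" using \<open>x < real N + 1\<close> by (simp add: field_simps)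
  finally show ?thesis unfolding N_def .
qed

definition b_integral_error :: "(nat \<Rightarrow> bool) \<Rightarrow> real \<Rightarrow> real \<Rightarrow> real" where
  "b_integral_error w \<beta> Y = b_integral w Y - \<beta> * Y\<^sup>2 / 2"

lemma M_w_eq_main_term_plus_error:
  assumes "0 < x"
  shows "M_w w x = \<beta> * x / 2 * (\<Sum>m\<in>{1..nat \<lfloor>x\<rfloor>}. alt_sign m / m)
    + (\<Sum>m\<in>{1..nat \<lfloor>x\<rfloor>}. alt_sign m * (b_integral_error w \<beta> (x/m) / (x/m)))"
proof -
  have "M_w w x = (\<Sum>m\<in>{1..nat \<lfloor>x\<rfloor>}.
      \<beta> * x / 2 * (alt_sign m / m) + alt_sign m * (b_integral_error w \<beta> (x/m) / (x/m)))"
    unfolding M_w_eq_sum_b_integral[OF assms] using assms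
    by (intro sum.cong) (simp_all add: b_integral_error_def power2_eq_square field_simps)
  then show ?thesis by (simp add: sum.distrib sum_distrib_left)
qed

context
  fixes w :: "nat \<Rightarrow> bool" and \<beta> :: real
  assumes beta_le: "\<bar>\<beta>\<bar> \<le> 1"
    and b_count_close: "\<And>n. \<bar>b_count w 1 n - \<beta> * n\<bar> \<le> 1"
begin

text \<open>On \<open>[k, k+1]\<close> the derivative of \<open>b_integral w\<close> is the constant \<open>b_count w 1 k\<close>, which
  differs from \<open>\<beta> Y\<close> by at most \<open>2\<close>.\<close>

lemma b_integral_error_lipschitz:
  assumes "0 \<le> y" "y \<le> z"
  shows "\<bar>b_integral_error w \<beta> z - b_integral_error w \<beta> y\<bar> \<le> 2 * (z - y)"
proof (rule lipschitz_if_lipschitz_on_unit_intervals[OF _ assms])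
  fix k :: nat and y z :: real
  assume yz: "real k \<le> y" "y \<le> z" "z \<le> real k + 1"
  have "b_integral w z - b_integral w y
      = (\<Sum>j\<in>{1..k}. of_bool (w j) * (z - j)) - (\<Sum>j\<in>{1..k}. of_bool (w j) * (y - j))"
    using yz b_integral_on_unit_interval[of k y w] b_integral_on_unit_interval[of k z w] by simp
  also have "\<dots> = (\<Sum>j\<in>{1..k}. (z - y) * of_bool (w j))"
    unfolding sum_subtractf[symmetric] by (rule sum.cong) (simp_all add: algebra_simps)
  also have "\<dots> = (z - y) * b_count w 1 k"
    by (simp add: b_count_def sum_distrib_left atLeastLessThanSuc_atLeastAtMost)
  finally have integral_diff: "b_integral w z - b_integral w y = (z - y) * b_count w 1 k" .
  have "b_integral_error w \<beta> z - b_integral_error w \<beta> y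
      = (b_integral w z - b_integral w y) - \<beta> * (z\<^sup>2 - y\<^sup>2) / 2"
    by (simp add: b_integral_error_def field_simps)
  also have "\<dots> = (z - y) * ((b_count w 1 k - \<beta> * k) - \<beta> * ((y + z) / 2 - k))"
    unfolding integral_diff by (simp add: power2_eq_square field_simps)
  finally have diff_eq: "b_integral_error w \<beta> z - b_integral_error w \<beta> y
      = (z - y) * ((b_count w 1 k - \<beta> * k) - \<beta> * ((y + z) / 2 - k))" .
  have "\<bar>\<beta> * ((y + z) / 2 - k)\<bar> \<le> 1"
  proof -
    have "\<bar>(y + z) / 2 - k\<bar> \<le> 1" using yz by (simp add: abs_le_iff field_simps)
    with beta_le show ?thesis unfolding abs_mult by (intro mult_le_one) auto
  qed
  then have "\<bar>(b_count w 1 k - \<beta> * k) - \<beta> * ((y + z) / 2 - k)\<bar> \<le> 2"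
    using b_count_close[of k] by linarith
  with yz(2) have "(z - y) * \<bar>(b_count w 1 k - \<beta> * k) - \<beta> * ((y + z) / 2 - k)\<bar> \<le> (z - y) * 2"
    by (intro mult_left_mono) auto
  with yz(2) show "\<bar>b_integral_error w \<beta> z - b_integral_error w \<beta> y\<bar> \<le> 2 * (z - y)"
    unfolding diff_eq by (simp add: abs_mult mult.commute)
qed

lemma b_integral_error_bound:
  assumes "0 \<le> Y"
  shows "\<bar>b_integral_error w \<beta> Y\<bar> \<le> 2 * Y"
  using b_integral_error_lipschitz[of 0 Y] assms by (simp add: b_integral_error_def b_integral_def)

lemma b_integral_error_quotient_bound:
  assumes "0 < Y"
  shows "\<bar>b_integral_error w \<beta> Y / Y\<bar> \<le> 2"
proof -
  have "\<bar>b_integral_error w \<beta> Y / Y\<bar> = \<bar>b_integral_error w \<beta> Y\<bar> / Y"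
    using assms by (rule abs_div_pos[symmetric])
  also have "\<dots> \<le> 2 * Y / Y"
    using b_integral_error_bound[of Y] assms by (intro divide_right_mono) simp_all
  also have "\<dots> = 2" using assms by simp
  finally show ?thesis .
qed

lemma b_integral_error_quotient_pair:
  assumes "1 \<le> k" "real (2*k) \<le> x"
  defines "Y1 \<equiv> x / real (2*k)" and "Y2 \<equiv> x / real (2*k-1)"
  shows "\<bar>b_integral_error w \<beta> Y2 / Y2 - b_integral_error w \<beta> Y1 / Y1\<bar> \<le> 2 / k"
proof -
  have "real (2*k-1) = 2*k - 1" using assms(1) by (simp add: of_nat_diff)
  then have Y: "0 < Y1" "Y1 \<le> Y2" "(Y2 - Y1) / Y2 = 1 / (2*k)"
    using assms by (auto intro!: divide_left_mono simp: field_simps Y1_def Y2_def)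
  have "\<bar>b_integral_error w \<beta> Y2 / Y2 - b_integral_error w \<beta> Y1 / Y1\<bar> \<le> 2 * 2 * ((Y2 - Y1) / Y2)"
    using Y b_integral_error_lipschitz[of Y1 Y2] b_integral_error_bound[of Y1]
    by (intro abs_quotient_diff_le) simp_all
  then show ?thesis unfolding Y(3) by simp
qed

text \<open>By \<open>M_w_eq_main_term_plus_error\<close>, the main term is \<open>\<beta> x log 2 / 2\<close> up to the tail of the
  alternating harmonic series, and pairing consecutive terms of the alternating error sum
  costs \<open>O(1/k)\<close> per pair, \<open>O(log x)\<close> in total.\<close>

lemma M_w_minus_main_term_bound:
  assumes "1 \<le> x"
  shows "\<bar>M_w w x - \<beta> * ln 2 / 2 * x\<bar> \<le> 5 + 2 * ln x"
proof -
  define N where "N = nat \<lfloor>x\<rfloor>"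
  define g where "g m = b_integral_error w \<beta> (x/m) / (x/m)" for m :: nat
  have N: "real N \<le> x" "x < real N + 1" "1 \<le> N" using assms unfolding N_def by linarith+
  have M: "M_w w x - \<beta> * ln 2 / 2 * x =
      \<beta> * x / 2 * ((\<Sum>m\<in>{1..N}. alt_sign m / m) - ln 2) + (\<Sum>m\<in>{1..N}. alt_sign m * g m)"
    using M_w_eq_main_term_plus_error[of x w \<beta>] assms
    by (simp add: N_def g_def algebra_simps)
  have main: "\<bar>\<beta> * x / 2 * ((\<Sum>m\<in>{1..N}. alt_sign m / m) - ln 2)\<bar> \<le> 1/2"
    unfolding N_def using beta_le assms by (rule main_term_error_bound)
  have "\<bar>g (2*k-1) - g (2*k)\<bar> \<le> 2 / k" if "k \<in> {1..N div 2}" for k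
  proof -
    from that have "1 \<le> k" "2*k \<le> N" by auto
    then have "real (2*k) \<le> x" using N(1) of_nat_le_iff[of "2*k" N] by linarith
    from b_integral_error_quotient_pair[OF \<open>1 \<le> k\<close> this] show ?thesis by (simp add: g_def)
  qed
  then have "(\<Sum>k\<in>{1..N div 2}. \<bar>g (2*k-1) - g (2*k)\<bar>) \<le> (\<Sum>k\<in>{1..N div 2}. 2 / k)"
    by (rule sum_mono)
  moreover have "(\<Sum>k\<in>{1..N div 2}. 2 / real k) = 2 * harm (N div 2)"
    unfolding harm_def sum_distrib_left by (simp add: divide_inverse)
  moreover have "harm (N div 2) \<le> ln x + 1"
    using N(1) assms by (intro harm_le_ln_plus_1) linarith
  moreover have "\<bar>g N\<bar> \<le> 2"
    using N assms b_integral_error_quotient_bound[of "x/N"] by (simp add: g_def)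
  ultimately have alternating: "\<bar>\<Sum>m\<in>{1..N}. alt_sign m * g m\<bar> \<le> 2 * ln x + 4"
    using abs_sum_alt_sign_le[of g N] by linarith
  have "\<bar>a + b\<bar> \<le> 5 + 2 * ln x" if "\<bar>a\<bar> \<le> 1/2" "\<bar>b\<bar> \<le> 2 * ln x + 4" for a b :: real
    using that abs_triangle_ineq[of a b] by linarith
  from this[OF main alternating] show ?thesis unfolding M .
qed

end

lemma ln_le_powr_divide:
  fixes x a :: real
  assumes "0 < x" "0 < a"
  shows "ln x \<le> x powr a / a"
proof -
  have "a * ln x \<le> x powr a - 1" using ln_le_minus_one[of "x powr a"] assms(1) by simp
  then show ?thesis using assms(2) by (simp add: field_simps)
qed

theorem theorem4p1:
  fixes w :: "nat \<Rightarrow> bool"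
  assumes "sturmian w"
  shows "b_freq w \<longlonglongrightarrow> beta_w w \<and>
    (\<forall>\<delta>::real. \<delta> > 0 \<longrightarrow> (\<exists>C::real. \<forall>x::real. x \<ge> 1 \<longrightarrow>
       \<bar>M_w w x - beta_w w * ln 2 / 2 * x\<bar> \<le> C * x powr (1/3 + \<delta>)))"
proof -
  obtain \<beta> :: real where lim: "b_freq w \<longlonglongrightarrow> \<beta>" and "0 \<le> \<beta>" "\<beta> \<le> 1"
    and close: "\<And>n. \<bar>b_count w 1 n - \<beta> * n\<bar> \<le> 1"
    using balanced_frequency[OF sturmian_balanced[OF assms]] by blast
  have beta: "beta_w w = \<beta>" unfolding beta_w_def using lim by (rule limI)
  have "\<bar>M_w w x - \<beta> * ln 2 / 2 * x\<bar> \<le> 11 * x powr (1/3 + \<delta>)" if "1 \<le> x" "0 < \<delta>" for x \<delta> :: real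
  proof -
    have "1 \<le> x powr (1/3)" "x powr (1/3) \<le> x powr (1/3 + \<delta>)"
      using that by (simp_all add: ge_one_powr_ge_zero powr_mono)
    moreover have "ln x \<le> 3 * x powr (1/3)" using ln_le_powr_divide[of x "1/3"] that by simp
    moreover have "\<bar>M_w w x - \<beta> * ln 2 / 2 * x\<bar> \<le> 5 + 2 * ln x"
      using \<open>0 \<le> \<beta>\<close> \<open>\<beta> \<le> 1\<close> close that(1) by (intro M_w_minus_main_term_bound) auto
    ultimately show ?thesis by linarith
  qed
  then show ?thesis
    using lim unfolding beta by (intro conjI allI impI exI[of _ 11]) auto
qed

end
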